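(* For every triple $XYZ\in\{I,S\}^3$, the set of contexts $\mathrm{ST}_{XYZ}$ of the uniform evaluator $XYZ$ is uniform, i.e. for all contexts $C_1,C_2$, $C_1(C_2)\in\mathrm{ST}_{XYZ}$ if and only if $C_1\in\mathrm{ST}_{XYZ}$ and $C_2\in\mathrm{ST}_{XYZ}$.
   Context: Terms: $\Lambda ::= x\mid\lambda x.\Lambda\mid\Lambda\Lambda$; $[N/x]B$ is capture-avoiding substitution; a redex is a term $(\lambda x.B)N$. An evaluator is a partial function $\Lambda\rightharpoonup\Lambda$ given by inference rules; it is undefined (diverges) on $M$ when there is no finite derivation; $\mathrm{id}$ is the identity evaluator. Eval-apply template: given evaluators $la,op_1,ar_1,op_2,ar_2$ (which may be the evaluator $ea$ being defined), $ea$ is defined by: (var) $ea(x)=x$; (abs) $ea(\lambda x.B)=\lambda x.B'$ if $la(B)=B'$; (con) $ea(MN)=B'$ if $op_1(M)=\lambda x.B$, $ar_1(N)=N'$ and $ea([N'/x]B)=B'$; (neu) $ea(MN)=M''N'$ if $op_1(M)=M'$, $M'$ is not an abstraction, $op_2(M')=M''$ and $ar_2(N)=N'$. Premises are evaluated left to right; each use of (con) contracts the redex $(\lambda x.B)N'$; reading these contractions in in-order traversal of the (possibly infinite) derivation, each located at its position in the whole current term, gives the evaluation sequence of $ea$ on the input. Uniform evaluator with code $XYZ\in\{I,S\}^3$: the instance of the template with $op_1=ea$, $op_2=\mathrm{id}$, and $la$ (resp. $ar_1$, $ar_2$) equal to $ea$ itself if $X$ (resp. $Y$, $Z$) is $S$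 and to $\mathrm{id}$ if it is $I$. A context is a term with one hole $\Box$; $C(R)$ replaces the hole by $R$, $C_1(C_2)$ replaces the hole of $C_1$ by context $C_2$. The set of contexts $\mathrm{ST}_e$ of an evaluator $e$ is the set of all contexts $C$ such that, for some input term, at some step of the evaluation sequence of $e$ the current term is $C(R)$ with $R$ the redex contracted at that step. *)

theory Defs
  imports Main
begin

datatype dB = Var nat | Lam dB | App dB dB

primrec lift :: "dB \<Rightarrow> nat \<Rightarrow> dB" where
  "lift (Var i) k = (if i < k then Var i else Var (Suc i))"
| "lift (Lam t) k = Lam (lift t (Suc k))"
| "lift (App s t) k = App (lift s k) (lift t k)"

primrec subst :: "dB \<Rightarrow> dB \<Rightarrow> nat \<Rightarrow> dB" where
  "subst (Var i) s k = (if k < i then Var (i - 1) else if i = k then s else Var i)"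
| "subst (Lam t) s k = Lam (subst t (lift s 0) (Suc k))"
| "subst (App t u) s k = App (subst t s k) (subst u s k)"

definition is_abs :: "dB \<Rightarrow> bool" where
  "is_abs M \<longleftrightarrow> (\<exists>B. M = Lam B)"

datatype ctx = Hole | CLam ctx | CAppL ctx dB | CAppR dB ctx

primrec plug :: "ctx \<Rightarrow> dB \<Rightarrow> dB" where
  "plug Hole R = R"
| "plug (CLam C) R = Lam (plug C R)"
| "plug (CAppL C N) R = App (plug C R) N"
| "plug (CAppR M C) R = App M (plug C R)"

primrec ccomp :: "ctx \<Rightarrow> ctx \<Rightarrow> ctx" where
  "ccomp Hole D = D"
| "ccomp (CLam C) D = CLam (ccomp C D)"
| "ccomp (CAppL C N) D = CAppL (ccomp C D) N"
| "ccomp (CAppR M C) D = CAppR M (ccomp C D)"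

datatype IS = I | S

text \<open>ev x y z M V: the uniform evaluator with code xyz maps M to V (finite derivation).
  sev x y z w M V: the evaluator selected by letter w (I = identity, S = the evaluator itself).\<close>
inductive ev :: "IS \<Rightarrow> IS \<Rightarrow> IS \<Rightarrow> dB \<Rightarrow> dB \<Rightarrow> bool"
  and sev :: "IS \<Rightarrow> IS \<Rightarrow> IS \<Rightarrow> IS \<Rightarrow> dB \<Rightarrow> dB \<Rightarrow> bool"
  for x y z :: IS where
  sev_I: "sev x y z I M M"
| sev_S: "ev x y z M V \<Longrightarrow> sev x y z S M V"
| ev_var: "ev x y z (Var n) (Var n)"
| ev_abs: "sev x y z x B B' \<Longrightarrow> ev x y z (Lam B) (Lam B')"
| ev_con: "ev x y z M (Lam B) \<Longrightarrow> sev x y z y N N' \<Longrightarrow> ev x y z (subst B N' 0) V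
           \<Longrightarrow> ev x y z (App M N) V"
| ev_neu: "ev x y z M M' \<Longrightarrow> \<not> is_abs M' \<Longrightarrow> sev x y z z N N'
           \<Longrightarrow> ev x y z (App M N) (App M' N')"

text \<open>occ x y z M C: in the evaluation sequence of evaluator xyz on input M (possibly
  diverging), some step contracts a redex located at context C, relative to the position of
  M in the whole current term. The outer context is accumulated by the rules, so occ x y z M C
  for a top-level input M means that at some step the current term is C(R) with R the
  contracted redex. Only premises to the left of a contraction need to terminate, matching the
  in-order traversal of a possibly infinite derivation.\<close>
inductive occ :: "IS \<Rightarrow> IS \<Rightarrow> IS \<Rightarrow> dB \<Rightarrow> ctx \<Rightarrow> bool"
  for x y z :: IS where
  occ_abs: "x = S \<Longrightarrow> occ x y z B C \<Longrightarrow> occ x y z (Lam B) (CLam C)"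
| occ_op: "occ x y z M C \<Longrightarrow> occ x y z (App M N) (CAppL C N)"
| occ_ar1: "ev x y z M (Lam B) \<Longrightarrow> y = S \<Longrightarrow> occ x y z N C
           \<Longrightarrow> occ x y z (App M N) (CAppR (Lam B) C)"
| occ_con: "ev x y z M (Lam B) \<Longrightarrow> sev x y z y N N' \<Longrightarrow> occ x y z (App M N) Hole"
| occ_body: "ev x y z M (Lam B) \<Longrightarrow> sev x y z y N N' \<Longrightarrow> occ x y z (subst B N' 0) C
           \<Longrightarrow> occ x y z (App M N) C"
| occ_neu: "ev x y z M M' \<Longrightarrow> \<not> is_abs M' \<Longrightarrow> z = S \<Longrightarrow> occ x y z N C
           \<Longrightarrow> occ x y z (App M N) (CAppR M' C)"

definition ST :: "IS \<Rightarrow> IS \<Rightarrow> IS \<Rightarrow> ctx set" where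
  "ST x y z = {C. \<exists>M. occ x y z M C}"

end

(* A context belongs to ST exactly when each of its frames, read from the root, is one the
   evaluator can descend through: a \<lambda>-frame only if X = S, any left-application frame, and a
   right-application frame only if its operator is a value of the evaluator that is an
   abstraction (then Y = S) or a neutral term (then Z = S). Completeness holds because every
   such frame is realised by a single rule of occ, with the redex (\<lambda>0)(\<lambda>0) filling the hole.
   Being a condition on each frame separately, it holds of C1(C2) iff it holds of C1 and C2. *)
theory Submission
  imports Defs
begin

primrec admissible_ctx :: "IS \<Rightarrow> IS \<Rightarrow> IS \<Rightarrow> ctx \<Rightarrow> bool" where
  "admissible_ctx x y z Hole = True"
| "admissible_ctx x y z (CLam C) \<longleftrightarrow> x = S \<and> admissible_ctx x y z C"
| "admissible_ctx x y z (CAppL C N) \<longleftrightarrow> admissible_ctx x y z C"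
| "admissible_ctx x y z (CAppR M C) \<longleftrightarrow> admissible_ctx x y z C \<and> (\<exists>M0. ev x y z M0 M) \<and>
      (if is_abs M then y = S else z = S)"

lemma sev_Var: "sev x y z w (Var n) (Var n)"
  by (cases w) (auto intro: ev_sev.intros)

lemma ev_Lam_Var: "ev x y z (Lam (Var n)) (Lam (Var n))"
  by (rule ev_abs) (rule sev_Var)

lemma occ_admissible_ctx: "occ x y z M C \<Longrightarrow> admissible_ctx x y z C"
  by (induction rule: occ.induct) (auto simp: is_abs_def)

lemma admissible_ctx_occ: "admissible_ctx x y z C \<Longrightarrow> \<exists>M. occ x y z M C"
proof (induction C)
  case Hole
  show ?case using occ_con[OF ev_Lam_Var sev_Var] by blast
next
  case (CLam C)
  then show ?case using occ_abs by fastforce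
next
  case (CAppL C N)
  then show ?case using occ_op by fastforce
next
  case (CAppR M C)
  then obtain M0 N where M0: "ev x y z M0 M" and N: "occ x y z N C"
    by auto
  show ?case
  proof (cases "is_abs M")
    case True
    then obtain B where "M = Lam B"
      by (auto simp: is_abs_def)
    with True CAppR.prems show ?thesis
      using occ_ar1[OF _ _ N] M0 by fastforce
  next
    case False
    with CAppR.prems show ?thesis
      using occ_neu[OF M0 False _ N] by auto
  qed
qed

lemma ST_iff_admissible_ctx: "C \<in> ST x y z \<longleftrightarrow> admissible_ctx x y z C"
  unfolding ST_def using occ_admissible_ctx admissible_ctx_occ by blast

lemma admissible_ctx_ccomp:
  "admissible_ctx x y z (ccomp C1 C2) \<longleftrightarrow> admissible_ctx x y z C1 \<and> admissible_ctx x y z C2"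
  by (induction C1) auto

theorem mainTheorem2:
  fixes x y z :: IS
  shows "\<forall>C1 C2. ccomp C1 C2 \<in> ST x y z \<longleftrightarrow> C1 \<in> ST x y z \<and> C2 \<in> ST x y z"
  by (simp add: ST_iff_admissible_ctx admissible_ctx_ccomp)

end
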